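(* Let $\mathbb{H}\in\{\mathbb{R},\mathbb{C}\}$, let $A\in\mathbb{H}^{M\times N}$ be a deterministic matrix whose $m$th row is $a_m^H$, let $x\in\mathbb{H}^N$, $e^z\in\mathbb{H}^M$, $e^y\in\mathbb{R}^M$ be random vectors, let $f:\mathbb{H}\to\mathbb{R}$ be a measurable function, and let $y=f(Ax+e^z)+e^y\in\mathbb{R}^M$, with $f$ applied entrywise. Let $\mathcal{T}:\mathbb{R}\to\mathbb{R}$ be a measurable preprocessing function, applied entrywise to vectors, and assume $\mathbb{E}[\mathcal{T}(y_m)^2]<\infty$ for all $m$ and $\mathbb{E}[\|x\|_2^4]<\infty$. Define $\overline{\mathcal{T}}(y)=\mathbb{E}[\mathcal{T}(y)]\in\mathbb{R}^M$, $K_x=\mathbb{E}[xx^H]$, $$T=\mathbb{E}\big[(\mathcal{T}(y)-\overline{\mathcal{T}}(y))(\mathcal{T}(y)-\overline{\mathcal{T}}(y))^T\big]\in\mathbb{R}^{M\times M},$$ and assume $T$ is full rank. Let $t\in\mathbb{R}^M$ be the (random) vector satisfying $Tt=\mathcal{T}(y)-\overline{\mathcal{T}}(y)$, and for $m=1,\dots,M$ let $$V_m=\mathbb{E}\big[(\mathcal{T}(y_m)-\overline{\mathcal{T}}(y_m))(xx^H-K_x)\big]\in\mathbb{H}^{N\times N}.$$ Consider the problem $$\underset{\widetilde W_m\in\mathbb{H}^{N\times N},\ m=0,\dots,M}{\mathrm{minimize}}\ \mathbb{E}\Big[\Big\|\widetilde W_0+\sum_{m=1}^M\mathcal{T}(y_m)\widetilde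 W_m-xx^H\Big\|_F^2\Big].$$ Then the matrix $D_y=\widetilde W_0+\sum_{m=1}^M\mathcal{T}(y_m)\widetilde W_m$ produced by a minimizer of this problem (i.e., the affine-in-$\mathcal{T}(y)$ matrix minimizing the spectral MSE $\mathbb{E}[\|D_y-xx^H\|_F^2]$) is $$D_y=K_x+\sum_{m=1}^M t_mV_m.$$
   Context: Expectations are taken jointly over the random quantities $x$, $e^z$, $e^y$ ($A$ is deterministic). For $\mathbb{H}=\mathbb{R}$, the superscript $H$ denotes transpose. $\|\cdot\|_F$ is the Frobenius norm. The matrix $D_y$ is called the linear spectral estimator (LSPE) matrix, and the linear spectral estimate of $x$ is a (scaled) leading eigenvector of $D_y$, i.e., a minimizer of $\|D_y-\tilde x\tilde x^H\|_F$ over $\tilde x\in\mathbb{H}^N$. *)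

theory Defs
  imports "HOL-Probability.Probability"
begin

text \<open>We capture "H in {R, C}" by a type class:
  a complete real normed field (hence R or C up to isomorphism, by Gelfand--Mazur/Ostrowski)
  equipped with its conjugation, characterised by x * conj x = |x|^2.
  Both real (conjugation = identity) and complex (conjugation = cnj) are instances.\<close>

class hscalar = real_normed_field + euclidean_space +
  fixes hcnj :: "'a \<Rightarrow> 'a"
  assumes hcnj_add: "hcnj ((x::'a) + y) = hcnj x + hcnj y"
    and hcnj_mult: "hcnj (x * y) = hcnj x * hcnj y"
    and hcnj_hcnj: "hcnj (hcnj x) = x"
    and mult_hcnj: "x * hcnj x = (norm x)\<^sup>2 *\<^sub>R 1"

instantiation real :: hscalar
begin
definition hcnj_real :: "real \<Rightarrow> real" where "hcnj_real x = x"
instance proof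
  fix x y :: real
  show "hcnj (x + y) = hcnj x + hcnj y" "hcnj (x * y) = hcnj x * hcnj y" "hcnj (hcnj x) = x"
    by (simp_all add: hcnj_real_def)
  show "x * hcnj x = (norm x)\<^sup>2 *\<^sub>R 1"
    by (simp add: hcnj_real_def power2_eq_square)
qed
end

instantiation complex :: hscalar
begin
definition hcnj_complex :: "complex \<Rightarrow> complex" where "hcnj_complex = cnj"
instance proof
  fix x y :: complex
  show "hcnj (x + y) = hcnj x + hcnj y" "hcnj (x * y) = hcnj x * hcnj y" "hcnj (hcnj x) = x"
    by (simp_all add: hcnj_complex_def)
  show "x * hcnj x = (norm x)\<^sup>2 *\<^sub>R 1"
    unfolding hcnj_complex_def scaleR_conv_of_real mult_1_right
    by (rule complex_norm_square[symmetric])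
qed
end

definition outer_H :: "'a::hscalar ^'n \<Rightarrow> 'a ^'n ^'n" where
  "outer_H v = (\<chi> i j. v $ i * hcnj (v $ j))"

definition frob_norm :: "'a::real_normed_vector ^'n ^'m \<Rightarrow> real" where
  "frob_norm A = sqrt (\<Sum>i\<in>UNIV. \<Sum>j\<in>UNIV. (norm (A $ i $ j))\<^sup>2)"

end

theory Submission
  imports Defs
begin

(* The objective is a quadratic function of the coefficients (W_0, W_1, ..., W_M), so at a
   minimiser the error D_y - x x^H is L^2-orthogonal to every perturbation direction
   C_0 + sum_m T(y_m) C_m.  Orthogonality to the constants gives
   W_0 + sum_m E[T(y_m)] W_m = K_x; orthogonality to T(y_k) C, after centring, gives the normal
   equations V_k = sum_m T_km W_m.  Hence D_y = K_x + sum_m (T(y_m) - E[T(y_m)]) W_m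
   = K_x + sum_m (T t)_m W_m, and the symmetry of T turns this into K_x + sum_m t_m V_m. *)

lemma hcnj_zero [simp]: "hcnj (0::'a::hscalar) = 0"
  using hcnj_add[of "0::'a" 0] by simp

lemma hcnj_eq_scaleR_inverse: "hcnj (a::'a::hscalar) = (norm a)\<^sup>2 *\<^sub>R inverse a"
proof (cases "a = 0")
  case False
  have "hcnj a = inverse a * (a * hcnj a)" using False by (simp add: field_simps)
  then show ?thesis by (simp add: mult_hcnj)
qed simp

lemma norm_hcnj [simp]: "norm (hcnj (a::'a::hscalar)) = norm a"
  by (cases "a = 0") (simp_all add: hcnj_eq_scaleR_inverse norm_inverse power2_eq_square)

lemma borel_measurable_hcnj [measurable]: "(hcnj :: 'a::hscalar \<Rightarrow> 'a) \<in> borel_measurable borel"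
  unfolding hcnj_eq_scaleR_inverse[abs_def] by measurable

lemma borel_measurable_vec_nth [measurable]:
  "(\<lambda>v::'a::topological_space^'n. v $ i) \<in> borel_measurable borel"
  by (intro borel_measurable_continuous_onI continuous_on_component continuous_on_id)

lemma borel_measurable_vec_lambda [measurable (raw)]:
  fixes f :: "'i::finite \<Rightarrow> 'a \<Rightarrow> 'b::euclidean_space"
  assumes "\<And>i. f i \<in> borel_measurable M"
  shows "(\<lambda>w. \<chi> i. f i w) \<in> borel_measurable M"
  unfolding borel_measurable_euclidean_space[where 'c="'b^'i"]
  by (auto simp: Basis_vec_def inner_axis intro!: borel_measurable_inner assms)

lemma integrable_vec_lambda:
  fixes f :: "'i::finite \<Rightarrow> 'a \<Rightarrow> 'b::euclidean_space"
  assumes "\<And>i. integrable M (f i)"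
  shows "integrable M (\<lambda>w. \<chi> i. f i w)"
proof (rule Bochner_Integration.integrable_bound)
  show "integrable M (\<lambda>w. \<Sum>i\<in>UNIV. norm (f i w))"
    using assms by auto
  show "(\<lambda>w. \<chi> i. f i w) \<in> borel_measurable M"
    using assms by (intro borel_measurable_vec_lambda borel_measurable_integrable)
  show "AE w in M. norm (\<chi> i. f i w) \<le> norm (\<Sum>i\<in>UNIV. norm (f i w))"
    by (intro AE_I2) (simp add: norm_vec_def L2_set_le_sum sum_nonneg)
qed

lemma integral_vec_lambda:
  fixes f :: "'i::finite \<Rightarrow> 'a \<Rightarrow> 'b::euclidean_space"
  assumes "\<And>i. integrable M (f i)"
  shows "(\<integral>w. (\<chi> i. f i w) \<partial>M) = (\<chi> i. \<integral>w. f i w \<partial>M)"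
proof (rule vec_eq_iff[THEN iffD2, rule_format])
  fix i
  show "(\<integral>w. (\<chi> i. f i w) \<partial>M) $ i = (\<chi> i. \<integral>w. f i w \<partial>M) $ i"
    using integral_bounded_linear[OF bounded_linear_vec_nth[of i] integrable_vec_lambda[of M f, OF assms]]
    by simp
qed

lemma borel_measurable_outer_H [measurable]:
  "(outer_H :: 'a::hscalar^'n \<Rightarrow> _) \<in> borel_measurable borel"
  unfolding outer_H_def[abs_def] by measurable

lemma frob_norm_eq_norm: "frob_norm A = norm A"
  unfolding frob_norm_def norm_vec_def L2_set_def
  by (simp add: sum_nonneg)

lemma norm_outer_H: "norm (outer_H (v::'a::hscalar^'n)) = (norm v)\<^sup>2"
proof -
  have "(norm (outer_H v))\<^sup>2 = (\<Sum>i\<in>UNIV. \<Sum>j\<in>UNIV. (norm (v$i))\<^sup>2 * (norm (v$j))\<^sup>2)"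
    unfolding frob_norm_eq_norm[symmetric] frob_norm_def outer_H_def
    by (simp add: sum_nonneg norm_mult power_mult_distrib)
  also have "\<dots> = ((norm v)\<^sup>2)\<^sup>2"
    unfolding norm_vec_def L2_set_def
    by (simp add: sum_nonneg power2_eq_square sum_product)
  finally show ?thesis
    by (metis norm_ge_zero zero_le_power2 power2_eq_iff_nonneg)
qed

definition square_integrable :: "'a measure \<Rightarrow> ('a \<Rightarrow> 'b::real_normed_vector) \<Rightarrow> bool" where
  "square_integrable M F \<longleftrightarrow> F \<in> borel_measurable M \<and> integrable M (\<lambda>w. (norm (F w))\<^sup>2)"

lemma square_integrable_real:
  "square_integrable M (f :: 'a \<Rightarrow> real) \<longleftrightarrow> f \<in> borel_measurable M \<and> integrable M (\<lambda>w. (f w)\<^sup>2)"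
  by (simp add: square_integrable_def)

lemma integrable_norm_le_mult_square_integrable:
  fixes H :: "'a \<Rightarrow> 'c::{banach, second_countable_topology}"
  assumes F: "square_integrable M F" and G: "square_integrable M G"
    and H: "H \<in> borel_measurable M" and le: "\<And>w. norm (H w) \<le> norm (F w) * norm (G w)"
  shows "integrable M H"
proof (rule Bochner_Integration.integrable_bound)
  show "integrable M (\<lambda>w. (norm (F w))\<^sup>2 + (norm (G w))\<^sup>2)"
    using F G by (simp add: square_integrable_def)
  show "AE w in M. norm (H w) \<le> norm ((norm (F w))\<^sup>2 + (norm (G w))\<^sup>2)"
  proof (intro AE_I2)
    fix w
    have "0 \<le> norm (F w) * norm (G w)" by simp
    then have "norm (F w) * norm (G w) \<le> (norm (F w))\<^sup>2 + (norm (G w))\<^sup>2"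
      using sum_squares_bound[of "norm (F w)" "norm (G w)"] by linarith
    then show "norm (H w) \<le> norm ((norm (F w))\<^sup>2 + (norm (G w))\<^sup>2)"
      using le[of w] by simp
  qed
qed (fact H)

lemma integrable_inner_square_integrable:
  fixes F G :: "'a \<Rightarrow> 'b::euclidean_space"
  assumes "square_integrable M F" "square_integrable M G"
  shows "integrable M (\<lambda>w. F w \<bullet> G w)"
  using assms by (intro integrable_norm_le_mult_square_integrable[OF assms])
    (auto simp: square_integrable_def Cauchy_Schwarz_ineq2)

lemma integrable_scaleR_square_integrable:
  fixes f :: "'a \<Rightarrow> real" and F :: "'a \<Rightarrow> 'b::euclidean_space"
  assumes "square_integrable M f" "square_integrable M F"
  shows "integrable M (\<lambda>w. f w *\<^sub>R F w)"
  using assms by (intro integrable_norm_le_mult_square_integrable[OF assms])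
    (auto simp: square_integrable_def)

lemma power2_norm_add_scaleR:
  fixes a b :: "'a::real_inner"
  shows "(norm (a + e *\<^sub>R b))\<^sup>2 = (norm a)\<^sup>2 + 2 * e * (a \<bullet> b) + e\<^sup>2 * (norm b)\<^sup>2"
  by (simp only: power2_norm_eq_inner) (simp add: inner_add_left inner_add_right inner_commute
      power2_eq_square algebra_simps)

lemma square_integrable_add:
  fixes F G :: "'a \<Rightarrow> 'b::euclidean_space"
  assumes F: "square_integrable M F" and G: "square_integrable M G"
  shows "square_integrable M (\<lambda>w. F w + G w)"
  using assms integrable_inner_square_integrable[OF F G]
  unfolding square_integrable_def power2_norm_add_scaleR[where e=1, simplified]
  by auto

lemma square_integrable_uminus:
  fixes F :: "'a \<Rightarrow> 'b::euclidean_space"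
  shows "square_integrable M F \<Longrightarrow> square_integrable M (\<lambda>w. - F w)"
  by (simp add: square_integrable_def)

lemma square_integrable_diff:
  fixes F G :: "'a \<Rightarrow> 'b::euclidean_space"
  shows "square_integrable M F \<Longrightarrow> square_integrable M G \<Longrightarrow> square_integrable M (\<lambda>w. F w - G w)"
  using square_integrable_add[of M F "\<lambda>w. - G w"] square_integrable_uminus[of M G] by simp

lemma square_integrable_scaleR_left:
  fixes c :: "'b::euclidean_space"
  shows "square_integrable M (f :: 'a \<Rightarrow> real) \<Longrightarrow> square_integrable M (\<lambda>w. f w *\<^sub>R c)"
  by (auto simp: square_integrable_def power_mult_distrib)

lemma (in finite_measure) square_integrable_const:
  "square_integrable M (\<lambda>_. c :: 'b::euclidean_space)"
  by (simp add: square_integrable_def)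

lemma (in finite_measure) square_integrable_sum:
  fixes F :: "'i \<Rightarrow> 'a \<Rightarrow> 'b::euclidean_space"
  shows "finite I \<Longrightarrow> (\<And>i. i \<in> I \<Longrightarrow> square_integrable M (F i)) \<Longrightarrow>
    square_integrable M (\<lambda>w. \<Sum>i\<in>I. F i w)"
  by (induction I rule: finite_induct) (simp_all add: square_integrable_const square_integrable_add)

lemma (in finite_measure) integrable_square_integrable:
  fixes F :: "'a \<Rightarrow> 'b::euclidean_space"
  assumes "square_integrable M F" shows "integrable M F"
  using integrable_scaleR_square_integrable[OF square_integrable_const[of 1] assms] by simp

lemma integral_power2_norm_add_scaleR:
  fixes G D :: "'a \<Rightarrow> 'b::euclidean_space"
  assumes G: "square_integrable M G" and D: "square_integrable M D"
  shows "(\<integral>w. (norm (G w + e *\<^sub>R D w))\<^sup>2 \<partial>M) =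
    (\<integral>w. (norm (G w))\<^sup>2 \<partial>M) + 2 * e * (\<integral>w. G w \<bullet> D w \<partial>M) + e\<^sup>2 * (\<integral>w. (norm (D w))\<^sup>2 \<partial>M)"
  using assms integrable_inner_square_integrable[OF G D]
  by (simp add: power2_norm_add_scaleR square_integrable_def)

lemma eq_0_if_quadratic_nonneg:
  fixes a b :: real
  assumes nonneg: "\<And>e. 0 \<le> 2 * e * a + e\<^sup>2 * b"
  shows "a = 0"
proof (rule ccontr)
  assume "a \<noteq> 0"
  define t where "t = 1 / (\<bar>b\<bar> + 1)"
  have t: "0 < t" "t * b < 2"
    unfolding t_def by (auto simp: field_simps abs_if)
  have "0 \<le> 2 * (- t * a) * a + (- t * a)\<^sup>2 * b" by (rule nonneg)
  also have "\<dots> = (t * a\<^sup>2) * (t * b - 2)" by (simp add: power2_eq_square algebra_simps)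
  also have "\<dots> < 0" using \<open>a \<noteq> 0\<close> t by (intro mult_pos_neg) auto
  finally show False by simp
qed

lemma integral_inner_eq_0_if_minimal:
  fixes G D :: "'a \<Rightarrow> 'b::euclidean_space"
  assumes G: "square_integrable M G" and D: "square_integrable M D"
    and min: "\<And>e. (\<integral>w. (norm (G w))\<^sup>2 \<partial>M) \<le> (\<integral>w. (norm (G w + e *\<^sub>R D w))\<^sup>2 \<partial>M)"
  shows "(\<integral>w. G w \<bullet> D w \<partial>M) = 0"
proof (rule eq_0_if_quadratic_nonneg)
  fix e :: real
  show "0 \<le> 2 * e * (\<integral>w. G w \<bullet> D w \<partial>M) + e\<^sup>2 * (\<integral>w. (norm (D w))\<^sup>2 \<partial>M)"
    using min[of e] by (simp add: integral_power2_norm_add_scaleR[OF G D])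
qed

lemma (in finite_measure) affine_least_squares_orthogonal:
  fixes s :: "'m::finite \<Rightarrow> 'a \<Rightarrow> real" and X :: "'a \<Rightarrow> 'b::euclidean_space"
    and W0 :: 'b and W :: "'m \<Rightarrow> 'b"
  defines "G \<equiv> \<lambda>w. W0 + (\<Sum>m\<in>UNIV. s m w *\<^sub>R W m) - X w"
  assumes s: "\<And>m. square_integrable M (s m)" and X: "square_integrable M X"
    and min: "\<And>U0 U. (\<integral>w. (norm (G w))\<^sup>2 \<partial>M) \<le>
      (\<integral>w. (norm (U0 + (\<Sum>m\<in>UNIV. s m w *\<^sub>R U m) - X w))\<^sup>2 \<partial>M)"
  shows "(\<integral>w. G w \<partial>M) = 0" and "(\<integral>w. s k w *\<^sub>R G w \<partial>M) = 0"
proof -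
  have G: "square_integrable M G"
    unfolding G_def using s X
    by (intro square_integrable_diff square_integrable_add square_integrable_const
        square_integrable_sum square_integrable_scaleR_left) auto
  have orthogonal: "(\<integral>w. G w \<bullet> (C0 + (\<Sum>m\<in>UNIV. s m w *\<^sub>R C m)) \<partial>M) = 0" for C0 C
  proof (rule integral_inner_eq_0_if_minimal[OF G])
    show "square_integrable M (\<lambda>w. C0 + (\<Sum>m\<in>UNIV. s m w *\<^sub>R C m))"
      using s by (intro square_integrable_add square_integrable_const
          square_integrable_sum square_integrable_scaleR_left) auto
    fix e :: real
    have "G w + e *\<^sub>R (C0 + (\<Sum>m\<in>UNIV. s m w *\<^sub>R C m)) =
        (W0 + e *\<^sub>R C0) + (\<Sum>m\<in>UNIV. s m w *\<^sub>R (W m + e *\<^sub>R C m)) - X w" for w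
      by (simp add: G_def algebra_simps scaleR_sum_right sum.distrib)
    then show "(\<integral>w. (norm (G w))\<^sup>2 \<partial>M) \<le>
        (\<integral>w. (norm (G w + e *\<^sub>R (C0 + (\<Sum>m\<in>UNIV. s m w *\<^sub>R C m))))\<^sup>2 \<partial>M)"
      using min by presburger
  qed
  have G_int: "integrable M G" by (rule integrable_square_integrable[OF G])
  have "(\<integral>w. G w \<partial>M) \<bullet> B = 0" for B
    using orthogonal[of B "\<lambda>_. 0"] G_int by simp
  then show "(\<integral>w. G w \<partial>M) = 0"
    by (metis inner_eq_zero_iff)
  have "(\<integral>w. s k w *\<^sub>R G w \<partial>M) \<bullet> B = 0" for B
  proof -
    have "(\<Sum>m\<in>UNIV. s m w *\<^sub>R (if m = k then B else 0)) = s k w *\<^sub>R B" for w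
      by (simp add: if_distrib cong: if_cong)
    then have "(\<integral>w. G w \<bullet> (s k w *\<^sub>R B) \<partial>M) = 0"
      using orthogonal[of 0 "\<lambda>m. if m = k then B else 0"] by simp
    moreover have "(\<integral>w. s k w *\<^sub>R G w \<partial>M) \<bullet> B = (\<integral>w. G w \<bullet> (s k w *\<^sub>R B) \<partial>M)"
      using integrable_scaleR_square_integrable[OF s G]
      by (subst integral_inner_left[symmetric]) auto
    ultimately show ?thesis by simp
  qed
  then show "(\<integral>w. s k w *\<^sub>R G w \<partial>M) = 0"
    by (metis inner_eq_zero_iff)
qed

lemma (in prob_space) affine_least_squares_normal_equations:
  fixes s :: "'m::finite \<Rightarrow> 'a \<Rightarrow> real" and X :: "'a \<Rightarrow> 'b::euclidean_space"
    and W0 :: 'b and W :: "'m \<Rightarrow> 'b"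
  assumes s: "\<And>m. square_integrable M (s m)" and X: "square_integrable M X"
    and min: "\<And>U0 U. (\<integral>w. (norm (W0 + (\<Sum>m\<in>UNIV. s m w *\<^sub>R W m) - X w))\<^sup>2 \<partial>M) \<le>
      (\<integral>w. (norm (U0 + (\<Sum>m\<in>UNIV. s m w *\<^sub>R U m) - X w))\<^sup>2 \<partial>M)"
  shows "W0 + (\<Sum>m\<in>UNIV. expectation (s m) *\<^sub>R W m) = expectation X"
    and "(\<integral>w. (s k w - expectation (s k)) *\<^sub>R (X w - expectation X) \<partial>M) =
      (\<Sum>m\<in>UNIV. (\<integral>w. (s k w - expectation (s k)) * (s m w - expectation (s m)) \<partial>M) *\<^sub>R W m)"
proof -
  define G where "G w = W0 + (\<Sum>m\<in>UNIV. s m w *\<^sub>R W m) - X w" for w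
  define c where "c m w = s m w - expectation (s m)" for m w
  note orthogonal = affine_least_squares_orthogonal[OF s X min, folded G_def]
  have s_int: "integrable M (s m)" for m by (rule integrable_square_integrable[OF s])
  have X_int: "integrable M X" by (rule integrable_square_integrable[OF X])
  have "expectation G = W0 + (\<Sum>m\<in>UNIV. expectation (s m) *\<^sub>R W m) - expectation X"
    unfolding G_def using s_int X_int by (simp add: prob_space)
  then show mean: "W0 + (\<Sum>m\<in>UNIV. expectation (s m) *\<^sub>R W m) = expectation X"
    using orthogonal(1) by simp
  have c: "square_integrable M (c m)" for m
    unfolding c_def using s by (intro square_integrable_diff square_integrable_const)
  have X_centered: "square_integrable M (\<lambda>w. X w - expectation X)"
    using X by (intro square_integrable_diff square_integrable_const)
  have G_centered: "G w = (\<Sum>m\<in>UNIV. c m w *\<^sub>R W m) - (X w - expectation X)" for w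
    unfolding G_def c_def mean[symmetric]
    by (simp add: scaleR_left_diff_distrib sum_subtractf algebra_simps)
  have G: "square_integrable M G"
    unfolding G_centered[abs_def] using c X_centered
    by (intro square_integrable_diff[OF _ X_centered] square_integrable_sum
        square_integrable_scaleR_left) auto
  have "(\<integral>w. c k w *\<^sub>R G w \<partial>M) = 0"
    using integrable_scaleR_square_integrable[OF s G] integrable_square_integrable[OF G]
    by (simp add: c_def scaleR_left_diff_distrib orthogonal)
  moreover have "(\<integral>w. c k w *\<^sub>R G w \<partial>M) =
      (\<Sum>m\<in>UNIV. (\<integral>w. c k w * c m w \<partial>M) *\<^sub>R W m) - (\<integral>w. c k w *\<^sub>R (X w - expectation X) \<partial>M)"
    using integrable_inner_square_integrable[OF c c] integrable_scaleR_square_integrable[OF c X_centered]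
    by (simp add: G_centered scaleR_right_diff_distrib scaleR_sum_right)
  ultimately show "(\<integral>w. (s k w - expectation (s k)) *\<^sub>R (X w - expectation X) \<partial>M) =
      (\<Sum>m\<in>UNIV. (\<integral>w. (s k w - expectation (s k)) * (s m w - expectation (s m)) \<partial>M) *\<^sub>R W m)"
    by (simp add: c_def)
qed

lemma sum_scaleR_sum_matrix_row:
  fixes t :: "real^'m" and T :: "real^'n^'m" and W :: "'n \<Rightarrow> 'b::real_vector"
  shows "(\<Sum>m\<in>UNIV. t $ m *\<^sub>R (\<Sum>k\<in>UNIV. T $ m $ k *\<^sub>R W k)) = (\<Sum>k\<in>UNIV. (t v* T) $ k *\<^sub>R W k)"
  unfolding vector_matrix_mult_def
  by (simp add: scaleR_sum_left scaleR_sum_right) (rule sum.swap)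

theorem theorem1:
  fixes P :: "'w measure"
    and A :: "'k::hscalar ^'N ^'M"
    and x :: "'w \<Rightarrow> 'k ^'N"
    and ez :: "'w \<Rightarrow> 'k ^'M"
    and ey :: "'w \<Rightarrow> real ^'M"
    and f :: "'k \<Rightarrow> real"
    and Tf :: "real \<Rightarrow> real"
    and y :: "'w \<Rightarrow> real ^'M"
    and Tbar :: "real ^'M"
    and Kx :: "'k ^'N ^'N"
    and T :: "real ^'M ^'M"
    and t :: "'w \<Rightarrow> real ^'M"
    and V :: "'M \<Rightarrow> 'k ^'N ^'N"
    and J :: "'k ^'N ^'N \<Rightarrow> ('M \<Rightarrow> 'k ^'N ^'N) \<Rightarrow> real"
    and W0 :: "'k ^'N ^'N"
    and W :: "'M \<Rightarrow> 'k ^'N ^'N"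
  assumes P: "prob_space P"
    and x_rv: "x \<in> borel_measurable P"
    and ez_rv: "ez \<in> borel_measurable P"
    and ey_rv: "ey \<in> borel_measurable P"
    and f_meas: "f \<in> borel_measurable borel"
    and y_def: "\<And>\<omega>. y \<omega> = (\<chi> m. f ((A *v x \<omega>) $ m + ez \<omega> $ m) + ey \<omega> $ m)"
    and Tf_meas: "Tf \<in> borel_measurable borel"
    and Ty_sq: "\<And>m. integrable P (\<lambda>\<omega>. (Tf (y \<omega> $ m))\<^sup>2)"
    and x_4: "integrable P (\<lambda>\<omega>. (norm (x \<omega>)) ^ 4)"
    and Tbar_def: "Tbar = (\<chi> m. integral\<^sup>L P (\<lambda>\<omega>. Tf (y \<omega> $ m)))"
    and Kx_def: "Kx = integral\<^sup>L P (\<lambda>\<omega>. outer_H (x \<omega>))"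
    and T_def: "T = integral\<^sup>L P (\<lambda>\<omega>. (\<chi> i j. (Tf (y \<omega> $ i) - Tbar $ i) * (Tf (y \<omega> $ j) - Tbar $ j)))"
    and T_full_rank: "rank T = CARD('M)"
    and t_def: "\<And>\<omega>. T *v t \<omega> = (\<chi> m. Tf (y \<omega> $ m)) - Tbar"
    and V_def: "\<And>m. V m = integral\<^sup>L P (\<lambda>\<omega>. (Tf (y \<omega> $ m) - Tbar $ m) *\<^sub>R (outer_H (x \<omega>) - Kx))"
    and J_def: "\<And>U0 U. J U0 U = integral\<^sup>L P (\<lambda>\<omega>.
                 (frob_norm (U0 + (\<Sum>m\<in>UNIV. Tf (y \<omega> $ m) *\<^sub>R U m) - outer_H (x \<omega>)))\<^sup>2)"
    and W_min: "\<And>U0 U. J W0 W \<le> J U0 U"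
  shows "\<forall>\<omega>\<in>space P. W0 + (\<Sum>m\<in>UNIV. Tf (y \<omega> $ m) *\<^sub>R W m) = Kx + (\<Sum>m\<in>UNIV. t \<omega> $ m *\<^sub>R V m)"
proof -
  interpret prob_space P by (rule P)
  note [measurable] = x_rv ez_rv ey_rv f_meas Tf_meas
  define s where "s m \<omega> = Tf (y \<omega> $ m)" for m \<omega>
  define X where "X \<omega> = outer_H (x \<omega>)" for \<omega>
  have [measurable]: "(\<lambda>\<omega>. y \<omega> $ m) \<in> borel_measurable P" for m
    unfolding y_def matrix_vector_mult_def by simp measurable
  have s: "square_integrable P (s m)" for m
    unfolding square_integrable_real s_def by (intro conjI Ty_sq) measurable
  have X: "square_integrable P X"
    unfolding square_integrable_def X_def norm_outer_H
    using x_4 by (simp add: power_mult[symmetric])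
  have "(\<integral>\<omega>. (norm (W0 + (\<Sum>m\<in>UNIV. s m \<omega> *\<^sub>R W m) - X \<omega>))\<^sup>2 \<partial>P) \<le>
      (\<integral>\<omega>. (norm (U0 + (\<Sum>m\<in>UNIV. s m \<omega> *\<^sub>R U m) - X \<omega>))\<^sup>2 \<partial>P)" for U0 U
    using W_min[of U0 U] by (simp add: J_def frob_norm_eq_norm s_def X_def)
  note normal = affine_least_squares_normal_equations[OF s X this, unfolded s_def X_def]
  have Tbar: "expectation (\<lambda>\<omega>. Tf (y \<omega> $ m)) = Tbar $ m" for m
    by (simp add: Tbar_def)
  have c: "square_integrable P (\<lambda>\<omega>. Tf (y \<omega> $ m) - Tbar $ m)" for m
    using s[of m] unfolding s_def by (intro square_integrable_diff square_integrable_const)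
  have T_entry: "T $ k $ m = (\<integral>\<omega>. (Tf (y \<omega> $ k) - Tbar $ k) * (Tf (y \<omega> $ m) - Tbar $ m) \<partial>P)" for k m
    using integrable_inner_square_integrable[OF c c]
    by (simp add: T_def integral_vec_lambda integrable_vec_lambda)
  have V: "V k = (\<Sum>m\<in>UNIV. T $ k $ m *\<^sub>R W m)" for k
    using normal(2)[of k] by (simp add: V_def T_entry Tbar Kx_def[symmetric])
  have mean: "W0 + (\<Sum>m\<in>UNIV. Tbar $ m *\<^sub>R W m) = Kx"
    using normal(1) by (simp add: Tbar Kx_def)
  have "transpose T = T"
    by (simp add: vec_eq_iff transpose_def T_entry mult.commute)
  then have "t \<omega> v* T = (\<chi> m. Tf (y \<omega> $ m)) - Tbar" for \<omega>
    by (metis t_def transpose_matrix_vector)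
  then show ?thesis
    by (simp add: sum_scaleR_sum_matrix_row V mean[symmetric] scaleR_left_diff_distrib sum_subtractf)
qed

end
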